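(* Fix a natural number $M\ge 1$. In the random coefficients perturbed utility model described in the context, suppose Assumptions 1–6 (as stated in the context) all hold with this same $M$. Then every $M$-th order moment of the random coefficients, \[ \int \beta_{k_1,\ell_1}\cdots\beta_{k_M,\ell_M}\,d\nu(\beta),\qquad k_m\in\{1,\dots,K\},\ \ell_m\in\{1,\dots,d_{k_m}\}, \] is identified. In addition, for each $\gamma\in\{1,\dots,K\}^{M+1}$, the partial derivative $\partial_\gamma V(0)$ is identified.
   Context: Model. There are $K$ goods. For each good $k\in\{1,\dots,K\}$ there is a covariate vector $x_k=(x_{k,1},\dots,x_{k,d_k})'\in\mathbb{R}^{d_k}$ and a random coefficient vector $\beta_k=(\beta_{k,1},\dots,\beta_{k,d_k})'\in\mathbb{R}^{d_k}$; write $x=(x_1',\dots,x_K')'\in\mathbb{R}^{d}$ with $d=\sum_k d_k$, and $\beta=(\beta_1',\dots,\beta_K')'$. Let $\varepsilon$ be an unobservable of unrestricted dimension taking values in a measurable space $E$, let $B\subseteq\mathbb{R}^K$ be a feasibility set and $D:B\times E\to\mathbb{R}\cup\{-\infty\}$ a disturbance. Choices $Y(x,\beta,\varepsilon)\in\mathbb{R}^K$ satisfy \[ Y(x,\beta,\varepsilon)\in\arg\max_{y\in B}\ \sum_{k=1}^K y_k(\beta_k'x_k)+D(y,\varepsilon) \] (the argmax being nonempty). The average structural function is $\overline{Y}(x)=\int Y(x,\beta,\varepsilon)\,d\tau(\beta,\varepsilon)$ for a probability measure $\tau$ on $(\beta,\varepsilon)$ not depending on $x$; $\overline{Y}_k$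 denotes its $k$-th component. Assumption 1 (slope–intercept independence): under $\tau$, $\beta$ and $\varepsilon$ are independent, i.e. $\tau=\nu\otimes\mu$ with $\nu$ a probability measure over $\beta$ and $\mu$ one over $\varepsilon$, and $\overline{Y}(x)$ is finite. Define $\overline{Y}(x,\beta)=\int Y(x,\beta,\varepsilon)\,d\mu(\varepsilon)$, so $\overline{Y}(x)=\int\overline{Y}(x,\beta)\,d\nu(\beta)$. Let $\overline{B}$ be the convex hull of $B$ and $\overline{D}(y)=\sup\{\int D(\tilde Y(\varepsilon),\varepsilon)\,d\mu(\varepsilon):\tilde Y:E\to B\text{ measurable},\ \int\tilde Y\,d\mu=y\}$ (with $\sup\emptyset=-\infty$). Assumption 2: (i) $\overline{Y}(x,\beta)$ is the unique element of (equivalently, equals) $\arg\max_{y\in\overline{B}}\sum_k y_k(\beta_k'x_k)+\overline{D}(y)$; (ii) $\overline{B}$ is nonempty, closed and convex; (iii) $\overline{D}:\mathbb{R}^K\to\mathbb{R}\cup\{-\infty\}$ is concave, upper semicontinuous, and finite at some $y\in\overline{B}$. Define the integrated indirect utility $V:\mathbb{R}^K\to\mathbb{R}$, $V(u)=\max_{y\in\overline{B}}\sum_k y_ku_k+\overline{D}(y)$. For $\gamma=(\gamma_1,\dots,\gamma_m)\in\{1,\dots,K\}^m$ write $\partial_\gamma V=\partial_{\gamma_1}\cdots\partial_{\gamma_m}V$, derivatives being with respect to the arguments of $V$. Assumption 3: all covariates $x_{k,\ell}$ are continuous, and each $x_k$ is a vector of regressors specific to good $k$ (it enters only the index $\beta_k'x_k$).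 Assumption 4 (for $M$): $\int\beta_{1,1}^M\,d\nu(\beta)$ is finite, known a priori, and nonzero. Assumption 5 (for $M$): (i) for each good $k$ and every $M$-th order partial derivative in $x$, integration and differentiation can be interchanged at $x=0$: $\partial_{x_{k_1,\ell_1}}\cdots\partial_{x_{k_M,\ell_M}}\overline{Y}_k(0)=\int\partial_{x_{k_1,\ell_1}}\cdots\partial_{x_{k_M,\ell_M}}\overline{Y}_k(0,\beta)\,d\nu(\beta)$; (ii) every $M$-th order moment $\int\beta_{k_1,\ell_1}\cdots\beta_{k_M,\ell_M}\,d\nu(\beta)$ exists and is finite; (iii) $V$ is $(M+1)$-times continuously differentiable in a neighborhood of $0$; (iv) $\partial_\gamma V(0)\neq0$ for each $\gamma\in\{1,\dots,K\}^{M+1}$; (v) $\overline{Y}(x)$ is known for $x$ in a neighborhood of $0$, or more generally on $H\cap\mathbb{R}^d_+$ for some neighborhood $H$ of $0$ (derivatives at $0$ then being one-sided). Assumption 6 (for $M$): for each tuple of good indices $(k_1,\dots,k_M)\in\{1,\dots,K\}^M$ there exist characteristic indices $\ell_m\in\{1,\dots,d_{k_m}\}$ such that $\int\beta_{k_1,\ell_1}\cdots\beta_{k_M,\ell_M}\,d\nu(\beta)$ exists and is nonzero (which indices is not assumed known). Identification: a quantity is identified if it is uniquely determined by the objects assumed known (the average structural function on the stated region and the quantities assumed known a priori), i.e. all model specifications $(B,D,\mu,\nu)$ satisfying the hypotheses and generating the same known objects yield the same value of the quantity. *)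

theory Defs
  imports "HOL-Probability.Probability"
begin

definition pdw :: "(real^'i) set \<Rightarrow> 'i \<Rightarrow> (real^'i \<Rightarrow> real) \<Rightarrow> real^'i \<Rightarrow> real" where
  "pdw S i f x = (SOME D. ((\<lambda>t. f (x + t *\<^sub>R axis i 1)) has_real_derivative D)
                            (at 0 within {t. x + t *\<^sub>R axis i 1 \<in> S}))"

fun pdl :: "(real^'i) set \<Rightarrow> 'i list \<Rightarrow> (real^'i \<Rightarrow> real) \<Rightarrow> real^'i \<Rightarrow> real" where
  "pdl S [] f = f"
| "pdl S (i # is) f = pdw S i (pdl S is f)"

definition Cn_on :: "nat \<Rightarrow> (real^'i \<Rightarrow> real) \<Rightarrow> (real^'i) set \<Rightarrow> bool" where
  "Cn_on n f N \<longleftrightarrow>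
     (\<forall>\<gamma>. length \<gamma> \<le> n \<longrightarrow> continuous_on N (pdl UNIV \<gamma> f)) \<and>
     (\<forall>\<gamma> i. length \<gamma> < n \<longrightarrow> (\<forall>u\<in>N.
        ((\<lambda>t. pdl UNIV \<gamma> f (u + t *\<^sub>R axis i 1)) has_real_derivative pdl UNIV (i # \<gamma>) f u) (at 0)))"

definition orthant :: "(real^'c) set" where
  "orthant = {x. \<forall>c. 0 \<le> x $ c}"

text \<open>Covariates are indexed by a finite type 'c, goods by a finite type 'k;
  good c is the good whose index covariate c enters (good-specific regressors).
  Index vector u_k = beta_k' x_k.\<close>
definition idx :: "('c::finite \<Rightarrow> 'k::finite) \<Rightarrow> real^'c \<Rightarrow> real^'c \<Rightarrow> real^'k" where
  "idx good x \<beta> = (\<chi> k. \<Sum>c | good c = k. \<beta> $ c * x $ c)"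

definition util :: "real^'k::finite \<Rightarrow> real^'k \<Rightarrow> ereal" where
  "util u y = ereal (\<Sum>k\<in>UNIV. y $ k * u $ k)"

definition argmax_set :: "'a set \<Rightarrow> ('a \<Rightarrow> ereal) \<Rightarrow> 'a set" where
  "argmax_set A f = {y\<in>A. \<forall>z\<in>A. f z \<le> f y}"

definition eint :: "'e measure \<Rightarrow> ('e \<Rightarrow> ereal) \<Rightarrow> ereal" where
  "eint \<mu> f = enn2ereal (\<integral>\<^sup>+ e. e2ennreal (f e) \<partial>\<mu>) - enn2ereal (\<integral>\<^sup>+ e. e2ennreal (- f e) \<partial>\<mu>)"

definition eint_defined :: "'e measure \<Rightarrow> ('e \<Rightarrow> ereal) \<Rightarrow> bool" where
  "eint_defined \<mu> f \<longleftrightarrow> f \<in> borel_measurable \<mu> \<and>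
     ((\<integral>\<^sup>+ e. e2ennreal (f e) \<partial>\<mu>) \<noteq> \<infinity> \<or> (\<integral>\<^sup>+ e. e2ennreal (- f e) \<partial>\<mu>) \<noteq> \<infinity>)"

text \<open>Integrated disturbance Dbar (sup of the empty set is -infinity).\<close>
definition Dbar :: "'e measure \<Rightarrow> (real^'k::finite) set \<Rightarrow> (real^'k \<Rightarrow> 'e \<Rightarrow> ereal) \<Rightarrow> real^'k \<Rightarrow> ereal" where
  "Dbar \<mu> B D y = Sup {eint \<mu> (\<lambda>e. D (Yt e) e) | Yt.
       Yt \<in> borel_measurable \<mu> \<and> (\<forall>e\<in>space \<mu>. Yt e \<in> B) \<and>
       integrable \<mu> Yt \<and> integral\<^sup>L \<mu> Yt = y \<and> eint_defined \<mu> (\<lambda>e. D (Yt e) e)}"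

definition Vsup :: "'e measure \<Rightarrow> (real^'k::finite) set \<Rightarrow> (real^'k \<Rightarrow> 'e \<Rightarrow> ereal) \<Rightarrow> real^'k \<Rightarrow> ereal" where
  "Vsup \<mu> B D u = (SUP y \<in> convex hull B. util u y + Dbar \<mu> B D y)"

text \<open>Integrated indirect utility V (real valued; its well-definedness as a finite
  maximum is part of the hypotheses, see V_welldef).\<close>
definition Vfun :: "'e measure \<Rightarrow> (real^'k::finite) set \<Rightarrow> (real^'k \<Rightarrow> 'e \<Rightarrow> ereal) \<Rightarrow> real^'k \<Rightarrow> real" where
  "Vfun \<mu> B D u = real_of_ereal (Vsup \<mu> B D u)"

definition V_welldef :: "'e measure \<Rightarrow> (real^'k::finite) set \<Rightarrow> (real^'k \<Rightarrow> 'e \<Rightarrow> ereal) \<Rightarrow> bool" where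
  "V_welldef \<mu> B D \<longleftrightarrow> (\<forall>u. \<bar>Vsup \<mu> B D u\<bar> \<noteq> \<infinity> \<and>
      (\<exists>y\<in>convex hull B. util u y + Dbar \<mu> B D y = Vsup \<mu> B D u))"

definition Ybar_b :: "'e measure \<Rightarrow> (real^'c \<Rightarrow> real^'c \<Rightarrow> 'e \<Rightarrow> real^'k::finite) \<Rightarrow> real^'c \<Rightarrow> real^'c \<Rightarrow> real^'k" where
  "Ybar_b \<mu> Y x \<beta> = (\<integral>e. Y x \<beta> e \<partial>\<mu>)"

definition ASF :: "(real^'c) measure \<Rightarrow> 'e measure \<Rightarrow> (real^'c \<Rightarrow> real^'c \<Rightarrow> 'e \<Rightarrow> real^'k::finite) \<Rightarrow> real^'c \<Rightarrow> real^'k" where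
  "ASF \<nu> \<mu> Y x = (\<integral>z. Y x (fst z) (snd z) \<partial>(\<nu> \<Otimes>\<^sub>M \<mu>))"

definition model :: "('c::finite \<Rightarrow> 'k::finite) \<Rightarrow> (real^'k) set \<Rightarrow> (real^'k \<Rightarrow> 'e \<Rightarrow> ereal)
    \<Rightarrow> 'e measure \<Rightarrow> (real^'c) measure \<Rightarrow> (real^'c \<Rightarrow> real^'c \<Rightarrow> 'e \<Rightarrow> real^'k) \<Rightarrow> bool" where
  "model good B D \<mu> \<nu> Y \<longleftrightarrow>
     prob_space \<mu> \<and> prob_space \<nu> \<and> sets \<nu> = sets borel \<and>
     (\<forall>y\<in>B. \<forall>e\<in>space \<mu>. D y e \<noteq> \<infinity>) \<and>
     (\<forall>x \<beta>. \<forall>e\<in>space \<mu>. Y x \<beta> e \<in> argmax_set B (\<lambda>y. util (idx good x \<beta>) y + D y e))"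

text \<open>Assumption 1 (independence is built in via the product measure): ASF finite.\<close>
definition assm1 :: "'e measure \<Rightarrow> (real^'c::finite) measure \<Rightarrow> (real^'c \<Rightarrow> real^'c \<Rightarrow> 'e \<Rightarrow> real^'k::finite) \<Rightarrow> bool" where
  "assm1 \<mu> \<nu> Y \<longleftrightarrow> (\<forall>x. integrable (\<nu> \<Otimes>\<^sub>M \<mu>) (\<lambda>z. Y x (fst z) (snd z)))"

definition assm2 :: "('c::finite \<Rightarrow> 'k::finite) \<Rightarrow> (real^'k) set \<Rightarrow> (real^'k \<Rightarrow> 'e \<Rightarrow> ereal)
    \<Rightarrow> 'e measure \<Rightarrow> (real^'c \<Rightarrow> real^'c \<Rightarrow> 'e \<Rightarrow> real^'k) \<Rightarrow> bool" where
  "assm2 good B D \<mu> Y \<longleftrightarrow>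
     \<comment> \<open>(i)\<close>
     (\<forall>x \<beta>. integrable \<mu> (Y x \<beta>) \<and>
        argmax_set (convex hull B) (\<lambda>y. util (idx good x \<beta>) y + Dbar \<mu> B D y) = {Ybar_b \<mu> Y x \<beta>}) \<and>
     \<comment> \<open>(ii)\<close>
     convex hull B \<noteq> {} \<and> closed (convex hull B) \<and> convex (convex hull B) \<and>
     \<comment> \<open>(iii): concave (convex hypograph), upper semicontinuous, finite somewhere on conv B\<close>
     convex {(y, r::real). ereal r \<le> Dbar \<mu> B D y} \<and>
     (\<forall>y. Limsup (at y) (Dbar \<mu> B D) \<le> Dbar \<mu> B D y) \<and>
     (\<exists>y\<in>convex hull B. \<bar>Dbar \<mu> B D y\<bar> \<noteq> \<infinity>)"

definition moment :: "(real^'c) measure \<Rightarrow> 'c list \<Rightarrow> real" where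
  "moment \<nu> cs = (\<integral>\<beta>. (\<Prod>m<length cs. \<beta> $ (cs ! m)) \<partial>\<nu>)"

definition assm4 :: "'c \<Rightarrow> nat \<Rightarrow> (real^'c) measure \<Rightarrow> bool" where
  "assm4 c0 M \<nu> \<longleftrightarrow> integrable \<nu> (\<lambda>\<beta>. (\<beta> $ c0) ^ M) \<and> (\<integral>\<beta>. (\<beta> $ c0) ^ M \<partial>\<nu>) \<noteq> 0"

definition assm5 :: "(real^'c::finite) set \<Rightarrow> nat \<Rightarrow> (real^'k::finite) set \<Rightarrow> (real^'k \<Rightarrow> 'e \<Rightarrow> ereal)
    \<Rightarrow> 'e measure \<Rightarrow> (real^'c) measure \<Rightarrow> (real^'c \<Rightarrow> real^'c \<Rightarrow> 'e \<Rightarrow> real^'k) \<Rightarrow> bool" where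
  "assm5 S M B D \<mu> \<nu> Y \<longleftrightarrow>
     \<comment> \<open>(i) interchange of M-th order differentiation (within S) and integration at x = 0\<close>
     (\<forall>k cs. length cs = M \<longrightarrow>
        integrable \<nu> (\<lambda>\<beta>. pdl S cs (\<lambda>x. Ybar_b \<mu> Y x \<beta> $ k) 0) \<and>
        pdl S cs (\<lambda>x. ASF \<nu> \<mu> Y x $ k) 0 = (\<integral>\<beta>. pdl S cs (\<lambda>x. Ybar_b \<mu> Y x \<beta> $ k) 0 \<partial>\<nu>)) \<and>
     \<comment> \<open>(ii)\<close>
     (\<forall>cs. length cs = M \<longrightarrow> integrable \<nu> (\<lambda>\<beta>. \<Prod>m<M. \<beta> $ (cs ! m))) \<and>
     \<comment> \<open>(iii)\<close>
     (\<exists>N. open N \<and> 0 \<in> N \<and> Cn_on (M + 1) (Vfun \<mu> B D) N) \<and>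
     \<comment> \<open>(iv)\<close>
     (\<forall>\<gamma>. length \<gamma> = M + 1 \<longrightarrow> pdl UNIV \<gamma> (Vfun \<mu> B D) 0 \<noteq> 0)"

definition assm6 :: "('c::finite \<Rightarrow> 'k::finite) \<Rightarrow> nat \<Rightarrow> (real^'c) measure \<Rightarrow> bool" where
  "assm6 good M \<nu> \<longleftrightarrow> (\<forall>ks. length ks = M \<longrightarrow> (\<exists>cs. length cs = M \<and>
      (\<forall>m<M. good (cs ! m) = ks ! m) \<and>
      integrable \<nu> (\<lambda>\<beta>. \<Prod>m<M. \<beta> $ (cs ! m)) \<and> (\<integral>\<beta>. (\<Prod>m<M. \<beta> $ (cs ! m)) \<partial>\<nu>) \<noteq> 0))"

definition spec_ok :: "('c::finite \<Rightarrow> 'k::finite) \<Rightarrow> 'c \<Rightarrow> nat \<Rightarrow> (real^'c) set \<Rightarrow> (real^'k) set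
    \<Rightarrow> (real^'k \<Rightarrow> 'e \<Rightarrow> ereal) \<Rightarrow> 'e measure \<Rightarrow> (real^'c) measure \<Rightarrow> (real^'c \<Rightarrow> real^'c \<Rightarrow> 'e \<Rightarrow> real^'k) \<Rightarrow> bool" where
  "spec_ok good c0 M S B D \<mu> \<nu> Y \<longleftrightarrow>
     model good B D \<mu> \<nu> Y \<and> assm1 \<mu> \<nu> Y \<and> assm2 good B D \<mu> Y \<and> V_welldef \<mu> B D \<and>
     assm4 c0 M \<nu> \<and> assm5 S M B D \<mu> \<nu> Y \<and> assm6 good M \<nu>"

end

theory Submission
  imports Defs
begin

(* By the envelope theorem the mean choice Ybar(x, beta) is the gradient of V at the index
   u = (beta_k' x_k)_k, so differentiating the average structural function at x = 0 along
   covariates c_1, ..., c_M of goods k_1, ..., k_M gives, by the chain rule,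
     d_{c_1 ... c_M} ASF_k(0) = d_{k_1 ... k_M k} V(0) * E[beta_{c_1} ... beta_{c_M}].
   The left side is known. Since the (M+1)-th derivatives of V are symmetric (Clairaut) and
   nonzero, these equations together with the known moment E[beta_{c0}^M] and the nonzero
   moments of Assumption 6 determine first every derivative d_gamma V(0), by induction on the
   number of indices of gamma different from good c0, and then every moment. *)

section \<open>Partial derivatives along coordinate lines\<close>

lemma axis_segment_in_open:
  fixes x :: "real^'i"
  assumes "open H" "x \<in> H"
  obtains d where "d > 0" "\<And>t. \<bar>t\<bar> < d \<Longrightarrow> x + t *\<^sub>R axis i 1 \<in> H"
proof -
  obtain r where r: "r > 0" "ball x r \<subseteq> H"
    using assms open_contains_ball by blast
  have "x + t *\<^sub>R axis i 1 \<in> H" if "\<bar>t\<bar> < r" for t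
    using r that by (auto simp: dist_norm)
  then show ?thesis using that r(1) by blast
qed

lemma pdl_append: "pdl S (xs @ ys) f = pdl S xs (pdl S ys f)"
  by (induction xs) auto

lemma at_axis_line_within_nontrivial:
  fixes x :: "real^'i"
  assumes "S = UNIV \<or> S = orthant" "x \<in> S"
  shows "at (0::real) within {t. x + t *\<^sub>R axis i 1 \<in> S} \<noteq> bot"
proof -
  have "{0<..} \<subseteq> {t. x + t *\<^sub>R axis i 1 \<in> S}"
    using assms by (auto simp: orthant_def axis_def)
  then have "at_right (0::real) \<le> at 0 within {t. x + t *\<^sub>R axis i 1 \<in> S}"
    by (rule at_le)
  then show ?thesis
    using trivial_limit_at_right_real by (metis bot.extremum_uniqueI)
qed

lemma pdw_eqI:
  assumes "((\<lambda>t. f (x + t *\<^sub>R axis i 1)) has_real_derivative D) (at 0 within {t. x + t *\<^sub>R axis i 1 \<in> S})"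
    and "at (0::real) within {t. x + t *\<^sub>R axis i 1 \<in> S} \<noteq> bot"
  shows "pdw S i f x = D"
  unfolding pdw_def
  by (rule some_equality, rule assms(1)) (use has_field_derivative_unique assms in blast)

lemma pdl_cong_on_open:
  fixes F G :: "real^'i \<Rightarrow> real"
  assumes H: "open H" and FG: "\<And>x. x \<in> H \<inter> S \<Longrightarrow> F x = G x"
  shows "x \<in> H \<inter> S \<Longrightarrow> pdl S cs F x = pdl S cs G x"
proof (induction cs arbitrary: x)
  case Nil
  then show ?case using FG by simp
next
  case (Cons c cs)
  obtain d where d: "d > 0" "\<And>t. \<bar>t\<bar> < d \<Longrightarrow> x + t *\<^sub>R axis c 1 \<in> H"
    using axis_segment_in_open[OF H] Cons.prems by blast
  have "eventually (\<lambda>t. pdl S cs F (x + t *\<^sub>R axis c 1) = pdl S cs G (x + t *\<^sub>R axis c 1))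
      (at 0 within {t. x + t *\<^sub>R axis c 1 \<in> S})"
    unfolding eventually_at using d Cons.IH by (intro exI[of _ d]) (auto simp: dist_real_def)
  moreover have "pdl S cs F (x + 0 *\<^sub>R axis c 1) = pdl S cs G (x + 0 *\<^sub>R axis c 1)"
    using Cons.IH Cons.prems by simp
  ultimately show ?case
    by (simp add: pdw_def has_field_derivative_cong_eventually)
qed

section \<open>Symmetry of higher partial derivatives\<close>

lemma dist_add_two_axes_le:
  fixes u :: "real^'k"
  shows "dist (u + s *\<^sub>R axis a 1 + t *\<^sub>R axis b 1) u \<le> \<bar>s\<bar> + \<bar>t\<bar>"
proof -
  have "norm (s *\<^sub>R axis a 1 + t *\<^sub>R axis b (1::real)) \<le> \<bar>s\<bar> + \<bar>t\<bar>"
    using norm_triangle_ineq[of "s *\<^sub>R axis a (1::real)" "t *\<^sub>R axis b 1"] by simp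
  then show ?thesis by (simp add: dist_norm add.assoc)
qed

lemma DERIV_line_shift:
  fixes f :: "real^'k \<Rightarrow> real"
  assumes "((\<lambda>t. f ((w + s *\<^sub>R e) + t *\<^sub>R e)) has_real_derivative D) (at 0)"
  shows "((\<lambda>s. f (w + s *\<^sub>R e)) has_real_derivative D) (at s)"
proof -
  have "((\<lambda>t. f (w + (t + s) *\<^sub>R e)) has_real_derivative D) (at 0)"
    using assms by (simp add: algebra_simps scaleR_add_left)
  then show ?thesis using DERIV_shift[of "\<lambda>s. f (w + s *\<^sub>R e)" D 0 s] by simp
qed

lemma mixed_difference_mvt:
  fixes f fi fij :: "real^'k \<Rightarrow> real"
  assumes square: "\<And>s t. \<bar>s\<bar> \<le> h \<Longrightarrow> \<bar>t\<bar> \<le> h \<Longrightarrow> u + s *\<^sub>R axis i 1 + t *\<^sub>R axis j 1 \<in> N"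
    and h: "h > 0"
    and fi: "\<And>v. v \<in> N \<Longrightarrow> ((\<lambda>t. f (v + t *\<^sub>R axis i 1)) has_real_derivative fi v) (at 0)"
    and fij: "\<And>v. v \<in> N \<Longrightarrow> ((\<lambda>t. fi (v + t *\<^sub>R axis j 1)) has_real_derivative fij v) (at 0)"
  obtains s t where "0 < s" "s < h" "0 < t" "t < h"
    "f (u + h *\<^sub>R axis i 1 + h *\<^sub>R axis j 1) - f (u + h *\<^sub>R axis i 1) - f (u + h *\<^sub>R axis j 1) + f u
      = h * h * fij (u + s *\<^sub>R axis i 1 + t *\<^sub>R axis j 1)"
proof -
  have swap: "u + a *\<^sub>R axis j 1 + b *\<^sub>R axis i 1 = u + b *\<^sub>R axis i 1 + a *\<^sub>R axis j 1" for a b :: real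
    by (simp add: algebra_simps)
  have "DERIV (\<lambda>s. f (u + h *\<^sub>R axis j 1 + s *\<^sub>R axis i 1) - f (u + s *\<^sub>R axis i 1)) s :>
      fi (u + h *\<^sub>R axis j 1 + s *\<^sub>R axis i 1) - fi (u + s *\<^sub>R axis i 1)" if "0 \<le> s" "s \<le> h" for s
  proof (rule DERIV_diff)
    have "u + h *\<^sub>R axis j 1 + s *\<^sub>R axis i 1 \<in> N"
      using square[of s h] that h unfolding swap by simp
    then show "DERIV (\<lambda>s. f (u + h *\<^sub>R axis j 1 + s *\<^sub>R axis i 1)) s :> fi (u + h *\<^sub>R axis j 1 + s *\<^sub>R axis i 1)"
      by (rule DERIV_line_shift[OF fi])
    have "u + s *\<^sub>R axis i 1 \<in> N"
      using square[of s 0] that h by simp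
    then show "DERIV (\<lambda>s. f (u + s *\<^sub>R axis i 1)) s :> fi (u + s *\<^sub>R axis i 1)"
      by (rule DERIV_line_shift[OF fi])
  qed
  from MVT2[OF h this] obtain s where s: "0 < s" "s < h"
    "(f (u + h *\<^sub>R axis j 1 + h *\<^sub>R axis i 1) - f (u + h *\<^sub>R axis i 1)) -
     (f (u + h *\<^sub>R axis j 1 + 0 *\<^sub>R axis i 1) - f (u + 0 *\<^sub>R axis i 1)) =
     (h - 0) * (fi (u + h *\<^sub>R axis j 1 + s *\<^sub>R axis i 1) - fi (u + s *\<^sub>R axis i 1))"
    by blast
  have "DERIV (\<lambda>t. fi (u + s *\<^sub>R axis i 1 + t *\<^sub>R axis j 1)) t :> fij (u + s *\<^sub>R axis i 1 + t *\<^sub>R axis j 1)"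
    if "0 \<le> t" "t \<le> h" for t
    using that s square[of s t] by (intro DERIV_line_shift[OF fij]) simp
  from MVT2[OF h this] obtain t where t: "0 < t" "t < h"
    "fi (u + s *\<^sub>R axis i 1 + h *\<^sub>R axis j 1) - fi (u + s *\<^sub>R axis i 1 + 0 *\<^sub>R axis j 1) =
     (h - 0) * fij (u + s *\<^sub>R axis i 1 + t *\<^sub>R axis j 1)"
    by blast
  show ?thesis
    using that[OF s(1,2) t(1,2)] s(3) t(3) unfolding swap by (simp add: algebra_simps)
qed

lemma two_axes_in_ball:
  fixes u :: "real^'k"
  assumes "ball u r \<subseteq> N" "\<bar>s\<bar> \<le> h" "\<bar>t\<bar> \<le> h" "h < r / 2"
  shows "u + s *\<^sub>R axis a 1 + t *\<^sub>R axis b 1 \<in> N"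
  using dist_add_two_axes_le[of u s a t b] assms by (auto simp: dist_commute)

text \<open>Both mixed partials equal the same second difference of f divided by h^2, at points
  within distance 2h of u.\<close>
lemma mixed_partials_meet_near:
  fixes f fi fj fij fji :: "real^'k \<Rightarrow> real"
  assumes ball: "ball u r \<subseteq> N" and h: "0 < h" "h < r / 2"
    and fi: "\<And>v. v \<in> N \<Longrightarrow> ((\<lambda>t. f (v + t *\<^sub>R axis i 1)) has_real_derivative fi v) (at 0)"
    and fj: "\<And>v. v \<in> N \<Longrightarrow> ((\<lambda>t. f (v + t *\<^sub>R axis j 1)) has_real_derivative fj v) (at 0)"
    and fij: "\<And>v. v \<in> N \<Longrightarrow> ((\<lambda>t. fi (v + t *\<^sub>R axis j 1)) has_real_derivative fij v) (at 0)"
    and fji: "\<And>v. v \<in> N \<Longrightarrow> ((\<lambda>t. fj (v + t *\<^sub>R axis i 1)) has_real_derivative fji v) (at 0)"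
  obtains p q where "dist p u < 2 * h" "dist q u < 2 * h" "p \<in> N" "q \<in> N" "fij p = fji q"
proof -
  note square = two_axes_in_ball[OF ball _ _ h(2)]
  obtain s t where st: "0 < s" "s < h" "0 < t" "t < h"
    "f (u + h *\<^sub>R axis i 1 + h *\<^sub>R axis j 1) - f (u + h *\<^sub>R axis i 1) - f (u + h *\<^sub>R axis j 1) + f u
     = h * h * fij (u + s *\<^sub>R axis i 1 + t *\<^sub>R axis j 1)"
    using mixed_difference_mvt[OF square h(1) fi fij] by blast
  obtain s' t' where st': "0 < s'" "s' < h" "0 < t'" "t' < h"
    "f (u + h *\<^sub>R axis j 1 + h *\<^sub>R axis i 1) - f (u + h *\<^sub>R axis j 1) - f (u + h *\<^sub>R axis i 1) + f u
     = h * h * fji (u + s' *\<^sub>R axis j 1 + t' *\<^sub>R axis i 1)"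
    using mixed_difference_mvt[OF square h(1) fj fji] by blast
  have "u + h *\<^sub>R axis j 1 + h *\<^sub>R axis i 1 = u + h *\<^sub>R axis i 1 + h *\<^sub>R axis j 1"
    by (simp add: algebra_simps)
  then have "h * h * fij (u + s *\<^sub>R axis i 1 + t *\<^sub>R axis j 1) = h * h * fji (u + s' *\<^sub>R axis j 1 + t' *\<^sub>R axis i 1)"
    using st(5) st'(5) by (simp only:)
  then have "fij (u + s *\<^sub>R axis i 1 + t *\<^sub>R axis j 1) = fji (u + s' *\<^sub>R axis j 1 + t' *\<^sub>R axis i 1)"
    using h by simp
  moreover have "dist (u + s *\<^sub>R axis i 1 + t *\<^sub>R axis j 1) u < 2 * h"
    "dist (u + s' *\<^sub>R axis j 1 + t' *\<^sub>R axis i 1) u < 2 * h"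
    using dist_add_two_axes_le[of u s i t j] dist_add_two_axes_le[of u s' j t' i] st st' by auto
  moreover have "u + s *\<^sub>R axis i 1 + t *\<^sub>R axis j 1 \<in> N" "u + s' *\<^sub>R axis j 1 + t' *\<^sub>R axis i 1 \<in> N"
    using square[of s t] square[of s' t'] st st' by auto
  ultimately show ?thesis
    using that by blast
qed

lemma mixed_partials_eq:
  fixes f fi fj fij fji :: "real^'k \<Rightarrow> real"
  assumes N: "open N" and u: "u \<in> N"
    and fi: "\<And>v. v \<in> N \<Longrightarrow> ((\<lambda>t. f (v + t *\<^sub>R axis i 1)) has_real_derivative fi v) (at 0)"
    and fj: "\<And>v. v \<in> N \<Longrightarrow> ((\<lambda>t. f (v + t *\<^sub>R axis j 1)) has_real_derivative fj v) (at 0)"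
    and fij: "\<And>v. v \<in> N \<Longrightarrow> ((\<lambda>t. fi (v + t *\<^sub>R axis j 1)) has_real_derivative fij v) (at 0)"
    and fji: "\<And>v. v \<in> N \<Longrightarrow> ((\<lambda>t. fj (v + t *\<^sub>R axis i 1)) has_real_derivative fji v) (at 0)"
    and cont: "continuous_on N fij" "continuous_on N fji"
  shows "fij u = fji u"
proof -
  obtain r where r: "r > 0" "ball u r \<subseteq> N"
    using N u open_contains_ball by blast
  have "\<bar>fij u - fji u\<bar> \<le> 0 + e" if e: "e > 0" for e
  proof -
    obtain d1 where d1: "d1 > 0" "\<And>p. p \<in> N \<Longrightarrow> dist p u < d1 \<Longrightarrow> dist (fij p) (fij u) < e / 2"
      using cont(1) u e unfolding continuous_on_iff by (meson half_gt_zero)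
    obtain d2 where d2: "d2 > 0" "\<And>q. q \<in> N \<Longrightarrow> dist q u < d2 \<Longrightarrow> dist (fji q) (fji u) < e / 2"
      using cont(2) u e unfolding continuous_on_iff by (meson half_gt_zero)
    define h where "h = min (r / 4) (min d1 d2 / 4)"
    have h: "0 < h" "h < r / 2" "2 * h < d1" "2 * h < d2"
      using r d1 d2 by (auto simp: h_def)
    obtain p q where pq: "dist p u < 2 * h" "dist q u < 2 * h" "p \<in> N" "q \<in> N" "fij p = fji q"
      using mixed_partials_meet_near[OF r(2) h(1,2) fi fj fij fji] .
    have "dist (fij p) (fij u) < e / 2" "dist (fji q) (fji u) < e / 2"
      using d1(2)[OF pq(3)] d2(2)[OF pq(4)] pq(1,2) h(3,4) by simp_all
    then show ?thesis
      using pq(5) unfolding dist_real_def by linarith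
  qed
  then have "\<bar>fij u - fji u\<bar> \<le> 0"
    by (rule field_le_epsilon)
  then show ?thesis by simp
qed

lemma pdl_swap_adjacent:
  fixes V :: "real^'k \<Rightarrow> real"
  assumes N: "open N" and V: "Cn_on n V N" and u: "u \<in> N" and len: "length (\<delta> @ i # j # \<rho>) \<le> n"
  shows "pdl UNIV (\<delta> @ i # j # \<rho>) V u = pdl UNIV (\<delta> @ j # i # \<rho>) V u"
proof -
  have D: "\<And>v. v \<in> N \<Longrightarrow>
      ((\<lambda>t. pdl UNIV \<gamma> V (v + t *\<^sub>R axis a 1)) has_real_derivative pdl UNIV (a # \<gamma>) V v) (at 0)"
    if "length \<gamma> < n" for \<gamma> a
    using V that unfolding Cn_on_def by blast
  have C: "continuous_on N (pdl UNIV \<gamma> V)" if "length \<gamma> \<le> n" for \<gamma>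
    using V that unfolding Cn_on_def by blast
  have "pdl UNIV (i # j # \<rho>) V v = pdl UNIV (j # i # \<rho>) V v" if "v \<in> N" for v
    using len by (intro mixed_partials_eq[OF N that D D D D C C, symmetric]) auto
  then have "pdl UNIV \<delta> (pdl UNIV (i # j # \<rho>) V) u = pdl UNIV \<delta> (pdl UNIV (j # i # \<rho>) V) u"
    using pdl_cong_on_open[OF N] u by blast
  then show ?thesis
    by (simp add: pdl_append)
qed

lemma swap_invariant_move_right:
  assumes swap: "\<And>\<delta> i j \<rho>. length (\<delta> @ i # j # \<rho>) = L \<Longrightarrow> F (\<delta> @ i # j # \<rho>) = F (\<delta> @ j # i # \<rho>)"
  shows "length (\<delta> @ x # ys @ zs) = L \<Longrightarrow> F (\<delta> @ x # ys @ zs) = F (\<delta> @ ys @ x # zs)"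
proof (induction ys arbitrary: \<delta>)
  case Nil
  then show ?case by simp
next
  case (Cons y ys)
  have "F (\<delta> @ x # y # ys @ zs) = F ((\<delta> @ [y]) @ x # ys @ zs)"
    using swap Cons.prems by simp
  also have "\<dots> = F ((\<delta> @ [y]) @ ys @ x # zs)"
    using Cons.IH[of "\<delta> @ [y]"] Cons.prems by simp
  finally show ?case by simp
qed

lemma mset_eq_invariant_if_swap_invariant:
  assumes swap: "\<And>\<delta> i j \<rho>. length (\<delta> @ i # j # \<rho>) = L \<Longrightarrow> F (\<delta> @ i # j # \<rho>) = F (\<delta> @ j # i # \<rho>)"
  shows "mset xs = mset ys \<Longrightarrow> length (\<delta> @ xs) = L \<Longrightarrow> F (\<delta> @ xs) = F (\<delta> @ ys)"
proof (induction xs arbitrary: \<delta> ys)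
  case Nil
  then show ?case by simp
next
  case (Cons x xs)
  then have "x \<in> set ys"
    by (metis list.set_intros(1) set_mset_mset)
  then obtain ys1 ys2 where ys: "ys = ys1 @ x # ys2"
    by (meson split_list)
  then have xs: "mset xs = mset (ys1 @ ys2)"
    using Cons.prems(1) by simp
  have "F (\<delta> @ x # xs) = F ((\<delta> @ [x]) @ ys1 @ ys2)"
    using Cons.IH[OF xs, of "\<delta> @ [x]"] Cons.prems(2) by simp
  also have "\<dots> = F (\<delta> @ ys1 @ x # ys2)"
    using swap_invariant_move_right[where F=F and L=L, OF swap] Cons.prems(2) mset_eq_length[OF xs] by simp
  finally show ?case
    using ys by simp
qed

lemma pdl_mset_eq:
  fixes V :: "real^'k \<Rightarrow> real"
  assumes "open N" "Cn_on n V N" "u \<in> N" "mset \<gamma> = mset \<gamma>'" "length \<gamma> \<le> n"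
  shows "pdl UNIV \<gamma> V u = pdl UNIV \<gamma>' V u"
  using mset_eq_invariant_if_swap_invariant[where F="\<lambda>\<gamma>. pdl UNIV \<gamma> V u" and L="length \<gamma>" and \<delta>="[]"]
    pdl_swap_adjacent[OF assms(1-3)] assms(4,5) by simp

section \<open>Derivatives of the average structural function\<close>

lemma idx_add_axis:
  "idx good (x + t *\<^sub>R axis c 1) \<beta> = idx good x \<beta> + (t * \<beta> $ c) *\<^sub>R axis (good c) 1"
  by (simp add: idx_def vec_eq_iff axis_def algebra_simps sum.distrib if_distrib[of "(*) _"] cong: if_cong)

lemma idx_zero [simp]: "idx good 0 \<beta> = 0"
  by (simp add: idx_def vec_eq_iff)

lemma open_idx_vimage:
  assumes "open N"
  shows "open {x. idx good x \<beta> \<in> N}"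
proof -
  have "continuous_on UNIV (\<lambda>x. idx good x \<beta>)"
    unfolding idx_def by (intro continuous_intros)
  then show ?thesis
    using open_vimage[OF assms] by (simp add: vimage_def)
qed

lemma pdl_comp_idx:
  fixes V :: "real^'k::finite \<Rightarrow> real" and good :: "'c::finite \<Rightarrow> 'k"
  assumes S: "S = UNIV \<or> S = orthant" and N: "open N" and V: "Cn_on n V N"
    and F: "\<And>x. idx good x \<beta> \<in> N \<Longrightarrow> F x = pdl UNIV \<gamma> V (idx good x \<beta>)"
  shows "length cs + length \<gamma> \<le> n \<Longrightarrow> idx good x \<beta> \<in> N \<Longrightarrow> x \<in> S \<Longrightarrow>
    pdl S cs F x = (\<Prod>m<length cs. \<beta> $ (cs ! m)) * pdl UNIV (map good cs @ \<gamma>) V (idx good x \<beta>)"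
proof (induction cs arbitrary: x)
  case Nil
  then show ?case using F by simp
next
  case (Cons c cs)
  define P where "P = (\<Prod>m<length cs. \<beta> $ (cs ! m))"
  define W where "W = pdl UNIV (map good cs @ \<gamma>) V"
  define DW where "DW = pdl UNIV (good c # map good cs @ \<gamma>) V"
  define u where "u = idx good x \<beta>"
  define T where "T = {t. x + t *\<^sub>R axis c 1 \<in> S}"
  have f: "DERIV (\<lambda>s. W (u + s *\<^sub>R axis (good c) 1)) ((\<lambda>t. t * \<beta> $ c) 0) :> DW u"
    using V Cons.prems unfolding Cn_on_def W_def DW_def u_def by simp
  have g: "((\<lambda>t. t * \<beta> $ c) has_real_derivative \<beta> $ c) (at 0 within T)"
    by (auto intro!: derivative_eq_intros)
  have "((\<lambda>t. W (u + (t * \<beta> $ c) *\<^sub>R axis (good c) 1)) has_real_derivative DW u * \<beta> $ c)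
      (at 0 within T)"
    using DERIV_chain[OF f g] by (simp add: o_def)
  then have comp: "((\<lambda>t. P * W (idx good (x + t *\<^sub>R axis c 1) \<beta>)) has_real_derivative P * (DW u * \<beta> $ c))
      (at 0 within T)"
    unfolding idx_add_axis u_def by (rule DERIV_cmult)
  have "x \<in> {x. idx good x \<beta> \<in> N}"
    using Cons.prems by simp
  then obtain d where d: "d > 0" "\<And>t. \<bar>t\<bar> < d \<Longrightarrow> x + t *\<^sub>R axis c 1 \<in> {x. idx good x \<beta> \<in> N}"
    using axis_segment_in_open[where i=c, OF open_idx_vimage[OF N]] by blast
  have "((\<lambda>t. pdl S cs F (x + t *\<^sub>R axis c 1)) has_real_derivative P * (DW u * \<beta> $ c))
      (at 0 within T)"
  proof (rule has_field_derivative_transform_within[OF comp d(1)])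
    show "0 \<in> T" using Cons.prems by (simp add: T_def)
    show "P * W (idx good (x + t *\<^sub>R axis c 1) \<beta>) = pdl S cs F (x + t *\<^sub>R axis c 1)"
      if "t \<in> T" "dist t 0 < d" for t
      using Cons.IH Cons.prems d(2) that by (simp add: P_def W_def T_def dist_real_def)
  qed
  then have "pdl S (c # cs) F x = P * (DW u * \<beta> $ c)"
    unfolding T_def using at_axis_line_within_nontrivial[OF S Cons.prems(3)] by (simp add: pdw_eqI)
  then show ?case
    by (simp add: prod.lessThan_Suc_shift P_def DW_def u_def del: prod.lessThan_Suc)
qed

lemma util_eq_inner: "util u y = ereal (y \<bullet> u)"
  by (simp add: util_def inner_vec_def)

lemma Vfun_affine_minorant:
  assumes a2: "assm2 good B D \<mu> Y" and wd: "V_welldef \<mu> B D"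
  obtains d where "\<And>v. Ybar_b \<mu> Y x \<beta> \<bullet> v + d \<le> Vfun \<mu> B D v"
    and "Vfun \<mu> B D (idx good x \<beta>) = Ybar_b \<mu> Y x \<beta> \<bullet> idx good x \<beta> + d"
proof -
  define y where "y = Ybar_b \<mu> Y x \<beta>"
  define u where "u = idx good x \<beta>"
  define Db where "Db = Dbar \<mu> B D"
  have "argmax_set (convex hull B) (\<lambda>y. util u y + Db y) = {y}"
    using a2 unfolding assm2_def y_def u_def Db_def by blast
  then have y: "y \<in> convex hull B" "\<And>z. z \<in> convex hull B \<Longrightarrow> util u z + Db z \<le> util u y + Db y"
    unfolding argmax_set_def by blast+
  have Vsup: "Vsup \<mu> B D v = (SUP z \<in> convex hull B. util v z + Db z)" for v
    by (simp add: Vsup_def Db_def)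
  have lower: "util v y + Db y \<le> Vsup \<mu> B D v" for v
    unfolding Vsup by (rule SUP_upper[OF y(1)])
  have touch: "Vsup \<mu> B D u = util u y + Db y"
    unfolding Vsup by (rule antisym) (auto intro!: SUP_least SUP_upper2[OF y(1)] y(2))
  have fin: "\<bar>Vsup \<mu> B D v\<bar> \<noteq> \<infinity>" for v
    using wd by (simp add: V_welldef_def)
  obtain d where d: "Db y = ereal d"
    using touch fin[of u] by (cases "Db y") (auto simp: util_eq_inner)
  have "Vfun \<mu> B D u = y \<bullet> u + d"
    using touch d by (simp add: Vfun_def util_eq_inner)
  moreover have "y \<bullet> v + d \<le> Vfun \<mu> B D v" for v
    using lower[of v] fin[of v] d by (cases "Vsup \<mu> B D v") (auto simp: Vfun_def util_eq_inner)
  ultimately show ?thesis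
    using that unfolding y_def u_def by blast
qed

lemma deriv_eq_of_touching_affine_minorant:
  fixes V :: "real^'k::finite \<Rightarrow> real"
  assumes minorant: "\<And>v. y \<bullet> v + d \<le> V v" and touch: "V u = y \<bullet> u + d"
    and deriv: "((\<lambda>t. V (u + t *\<^sub>R axis k 1)) has_real_derivative G) (at 0)"
  shows "G = y $ k"
proof -
  define g where "g t = V (u + t *\<^sub>R axis k 1) - t * y $ k" for t
  have "(g has_real_derivative G - y $ k) (at 0)"
    unfolding g_def using deriv by (auto intro!: derivative_eq_intros)
  moreover have "g 0 \<le> g t" for t
    using minorant[of "u + t *\<^sub>R axis k 1"] touch by (simp add: g_def inner_add_right inner_axis)
  ultimately have "G - y $ k = 0"
    using DERIV_local_min[OF _ zero_less_one] by blast
  then show ?thesis by simp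
qed

lemma Ybar_b_eq_axis_derivative_Vfun:
  assumes "assm2 good B D \<mu> Y" "V_welldef \<mu> B D"
    and "((\<lambda>t. Vfun \<mu> B D (idx good x \<beta> + t *\<^sub>R axis k 1)) has_real_derivative G) (at 0)"
  shows "Ybar_b \<mu> Y x \<beta> $ k = G"
  using Vfun_affine_minorant[OF assms(1,2)] deriv_eq_of_touching_affine_minorant assms(3) by metis

lemma pdl_ASF_eq_moment:
  fixes good :: "'c::finite \<Rightarrow> 'k::finite"
  assumes S: "S = UNIV \<or> S = orthant" and a2: "assm2 good B D \<mu> Y" and wd: "V_welldef \<mu> B D"
    and a5: "assm5 S M B D \<mu> \<nu> Y" and len: "length cs = M"
  shows "pdl S cs (\<lambda>x. ASF \<nu> \<mu> Y x $ k) 0 = pdl UNIV (map good cs @ [k]) (Vfun \<mu> B D) 0 * moment \<nu> cs"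
proof -
  obtain N where N: "open N" "0 \<in> N" "Cn_on (M + 1) (Vfun \<mu> B D) N"
    using a5 unfolding assm5_def by blast
  have "((\<lambda>t. Vfun \<mu> B D (u + t *\<^sub>R axis k 1)) has_real_derivative pdl UNIV [k] (Vfun \<mu> B D) u) (at 0)"
    if "u \<in> N" for u
    using N(3) that unfolding Cn_on_def by (elim conjE allE[of _ "[]"]) simp
  then have envelope: "Ybar_b \<mu> Y x \<beta> $ k = pdl UNIV [k] (Vfun \<mu> B D) (idx good x \<beta>)"
    if "idx good x \<beta> \<in> N" for x \<beta>
    using that by (intro Ybar_b_eq_axis_derivative_Vfun[OF a2 wd])
  have "pdl S cs (\<lambda>x. Ybar_b \<mu> Y x \<beta> $ k) 0 =
      (\<Prod>m<length cs. \<beta> $ (cs ! m)) * pdl UNIV (map good cs @ [k]) (Vfun \<mu> B D) 0" for \<beta>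
    using pdl_comp_idx[OF S N(1) N(3) envelope, where x=0 and cs=cs] N(2) S len by (auto simp: orthant_def)
  moreover have "pdl S cs (\<lambda>x. ASF \<nu> \<mu> Y x $ k) 0 = (\<integral>\<beta>. pdl S cs (\<lambda>x. Ybar_b \<mu> Y x \<beta> $ k) 0 \<partial>\<nu>)"
    using a5 len unfolding assm5_def by blast
  ultimately show ?thesis
    by (simp add: moment_def)
qed

section \<open>Identification\<close>

lemma moment_equations_identify:
  fixes W W' :: "'k list \<Rightarrow> real" and m m' :: "'c list \<Rightarrow> real" and good :: "'c \<Rightarrow> 'k"
  assumes eq: "\<And>cs k. length cs = M \<Longrightarrow> W (map good cs @ [k]) * m cs = W' (map good cs @ [k]) * m' cs"
    and sym: "\<And>\<gamma> \<gamma>'. length \<gamma> = M + 1 \<Longrightarrow> mset \<gamma> = mset \<gamma>' \<Longrightarrow> W \<gamma> = W \<gamma>'"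
    and sym': "\<And>\<gamma> \<gamma>'. length \<gamma> = M + 1 \<Longrightarrow> mset \<gamma> = mset \<gamma>' \<Longrightarrow> W' \<gamma> = W' \<gamma>'"
    and nonzero: "\<And>\<gamma>. length \<gamma> = M + 1 \<Longrightarrow> W' \<gamma> \<noteq> 0"
    and known: "m (replicate M c0) = m' (replicate M c0)" "m (replicate M c0) \<noteq> 0"
    and rich: "\<And>ks. length ks = M \<Longrightarrow> \<exists>cs. map good cs = ks \<and> m cs \<noteq> 0"
  shows "length \<gamma> = M + 1 \<Longrightarrow> W \<gamma> = W' \<gamma>"
    and "length cs = M \<Longrightarrow> m cs = m' cs"
proof -
  define a where "a = good c0"
  have m_eqI: "m cs = m' cs"
    if "length cs = M" "W (map good cs @ [k]) = W' (map good cs @ [k])" for cs k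
    using eq[OF that(1), of k] nonzero[of "map good cs @ [k]"] that by simp
  have W_eqI: "W (map good cs @ [k]) = W' (map good cs @ [k])"
    if "length cs = M" "m cs = m' cs" "m cs \<noteq> 0" for cs k
    using eq[OF that(1), of k] that(2,3) by simp
  text \<open>Induction on the number of indices different from a = good c0. If W and W' agree on
    rest @ [a], the equation for rest and a identifies the moment of some cs over rest that is
    nonzero by rich, and then the equation for rest and k identifies W on rest @ [k].\<close>
  have padded: "W (ks @ replicate (M + 1 - length ks) a) = W' (ks @ replicate (M + 1 - length ks) a)"
    if "length ks \<le> M + 1" for ks
    using that
  proof (induction ks)
    case Nil
    have "replicate (M + 1) a = map good (replicate M c0) @ [a]"
      by (simp add: a_def replicate_append_same)
    then show ?case
      using W_eqI[of "replicate M c0" a] known by simp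
  next
    case (Cons k ks)
    define rest where "rest = ks @ replicate (M - length ks) a"
    have rest: "length rest = M" "rest @ [a] = ks @ replicate (M + 1 - length ks) a"
      using Cons.prems by (auto simp: rest_def replicate_append_same Suc_diff_le)
    obtain cs where cs: "map good cs = rest" "m cs \<noteq> 0"
      using rich[OF rest(1)] by blast
    have "m cs = m' cs"
      using m_eqI[of cs a] Cons rest cs(1) by auto
    then have "W (rest @ [k]) = W' (rest @ [k])"
      using W_eqI[of cs k] rest(1) cs by auto
    moreover have "W (k # rest) = W (rest @ [k])" "W' (k # rest) = W' (rest @ [k])"
      using sym sym' rest(1) by simp_all
    ultimately show ?case
      using Cons.prems by (simp add: rest_def)
  qed
  show W: "W \<gamma> = W' \<gamma>" if "length \<gamma> = M + 1" for \<gamma>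
    using padded[of \<gamma>] that by simp
  show "m cs = m' cs" if "length cs = M"
    using m_eqI[OF that W[of "map good cs @ [a]"]] that by simp
qed

lemma assm5_pdl_Vfun_mset_eq:
  assumes "assm5 S M B D \<mu> \<nu> Y" "length \<gamma> = M + 1" "mset \<gamma> = mset \<gamma>'"
  shows "pdl UNIV \<gamma> (Vfun \<mu> B D) 0 = pdl UNIV \<gamma>' (Vfun \<mu> B D) 0"
proof -
  obtain N where N: "open N" "0 \<in> N" "Cn_on (M + 1) (Vfun \<mu> B D) N"
    using assms(1) unfolding assm5_def by blast
  show ?thesis
    using pdl_mset_eq[OF N(1,3,2) assms(3)] assms(2) by simp
qed

lemma assm6_nonzero_moment:
  assumes "assm6 good M \<nu>" "length ks = M"
  shows "\<exists>cs. map good cs = ks \<and> moment \<nu> cs \<noteq> 0"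
proof -
  obtain cs where "length cs = M" "\<forall>m<M. good (cs ! m) = ks ! m"
      "(\<integral>\<beta>. (\<Prod>m<M. \<beta> $ (cs ! m)) \<partial>\<nu>) \<noteq> 0"
    using assms unfolding assm6_def by blast
  then show ?thesis
    using assms(2) by (intro exI[of _ cs]) (auto simp: moment_def intro: nth_equalityI)
qed

lemma moment_replicate: "moment \<nu> (replicate M c) = (\<integral>\<beta>. (\<beta> $ c) ^ M \<partial>\<nu>)"
  by (simp add: moment_def)

theorem theorem1:
  fixes good :: "'c::finite \<Rightarrow> 'k::finite" and c0 :: 'c and M :: nat
    and S :: "(real^'c) set" and H :: "(real^'c) set"
    and B1 :: "(real^'k) set" and D1 :: "real^'k \<Rightarrow> 'e1 \<Rightarrow> ereal"
    and \<mu>1 :: "'e1 measure" and \<nu>1 :: "(real^'c) measure" and Y1 :: "real^'c \<Rightarrow> real^'c \<Rightarrow> 'e1 \<Rightarrow> real^'k"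
    and B2 :: "(real^'k) set" and D2 :: "real^'k \<Rightarrow> 'e2 \<Rightarrow> ereal"
    and \<mu>2 :: "'e2 measure" and \<nu>2 :: "(real^'c) measure" and Y2 :: "real^'c \<Rightarrow> real^'c \<Rightarrow> 'e2 \<Rightarrow> real^'k"
  assumes "M \<ge> 1"
    and "S = UNIV \<or> S = orthant"
    and "spec_ok good c0 M S B1 D1 \<mu>1 \<nu>1 Y1"
    and "spec_ok good c0 M S B2 D2 \<mu>2 \<nu>2 Y2"
    and "open H" and "0 \<in> H"
    and "\<forall>x\<in>H \<inter> S. ASF \<nu>1 \<mu>1 Y1 x = ASF \<nu>2 \<mu>2 Y2 x"
    and "(\<integral>\<beta>. (\<beta> $ c0) ^ M \<partial>\<nu>1) = (\<integral>\<beta>. (\<beta> $ c0) ^ M \<partial>\<nu>2)"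
  shows "(\<forall>cs. length cs = M \<longrightarrow> moment \<nu>1 cs = moment \<nu>2 cs) \<and>
         (\<forall>\<gamma>::'k list. length \<gamma> = M + 1 \<longrightarrow>
            pdl UNIV \<gamma> (Vfun \<mu>1 B1 D1) 0 = pdl UNIV \<gamma> (Vfun \<mu>2 B2 D2) 0)"
proof -
  note S = assms(2)
  have hyps1: "assm2 good B1 D1 \<mu>1 Y1" "V_welldef \<mu>1 B1 D1" "assm4 c0 M \<nu>1"
      "assm5 S M B1 D1 \<mu>1 \<nu>1 Y1" "assm6 good M \<nu>1"
    and hyps2: "assm2 good B2 D2 \<mu>2 Y2" "V_welldef \<mu>2 B2 D2" "assm5 S M B2 D2 \<mu>2 \<nu>2 Y2"
    using assms(3,4) by (auto simp: spec_ok_def)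
  have "0 \<in> H \<inter> S"
    using assms(6) S by (auto simp: orthant_def)
  then have "pdl S cs (\<lambda>x. ASF \<nu>1 \<mu>1 Y1 x $ k) 0 = pdl S cs (\<lambda>x. ASF \<nu>2 \<mu>2 Y2 x $ k) 0" for cs k
    by (rule pdl_cong_on_open[OF assms(5), rotated]) (use assms(7) in simp)
  then have eq: "pdl UNIV (map good cs @ [k]) (Vfun \<mu>1 B1 D1) 0 * moment \<nu>1 cs =
      pdl UNIV (map good cs @ [k]) (Vfun \<mu>2 B2 D2) 0 * moment \<nu>2 cs" if "length cs = M" for cs k
    using pdl_ASF_eq_moment[OF S hyps1(1,2,4) that] pdl_ASF_eq_moment[OF S hyps2 that] by simp
  have nonzero: "pdl UNIV \<gamma> (Vfun \<mu>2 B2 D2) 0 \<noteq> 0" if "length \<gamma> = M + 1" for \<gamma>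
    using hyps2(3) that unfolding assm5_def by blast
  have known: "moment \<nu>1 (replicate M c0) = moment \<nu>2 (replicate M c0)" "moment \<nu>1 (replicate M c0) \<noteq> 0"
    using assms(8) hyps1(3) by (simp_all add: moment_replicate assm4_def)
  show ?thesis
    using moment_equations_identify[where W="\<lambda>\<gamma>. pdl UNIV \<gamma> (Vfun \<mu>1 B1 D1) 0"
        and W'="\<lambda>\<gamma>. pdl UNIV \<gamma> (Vfun \<mu>2 B2 D2) 0", OF eq
        assm5_pdl_Vfun_mset_eq[OF hyps1(4)] assm5_pdl_Vfun_mset_eq[OF hyps2(3)] nonzero known
        assm6_nonzero_moment[OF hyps1(5)]]
    by blast
qed

end
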